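(* Let $f(X)=X^n+a_{n-1}X^{n-1}+\dots+a_1X+a_0\in A[X]$ with $n\geq 1$, $p\nmid n$ and $a_0\neq 0$. Write $l=v(a_0)$ and assume $v(a_{n-i})>il/n$ for all $i=1,\dots,n-1$. Then the number $R$ of roots of $f$ in $K^\ast=K\setminus\{0\}$ equals the number of roots of $X^n+a_0$ in $K^\ast$. Moreover, if $n\nmid l$ then $R=0$, and if $n\mid l$ then $R=\gcd(n,q-1)$ if $-\delta(a_0)$ is an $n$-th power in $\kappa$, and $R=0$ otherwise.
   Context: $K$ is a field complete with respect to a non-archimedean discrete valuation $v$, normalized by $v(\pi)=1$ for a uniformizer $\pi$ of the valuation ring $A=\{x\in K: v(x)\geq 0\}$; the residue field $\kappa=A/\pi A$ is finite with $q$ elements and characteristic $p$. For $a\in K^\ast$ with $v(a)=l$, the first non-zero digit of $a$ is $\delta(a)=\overline{a/\pi^l}\in\kappa^\ast$, the residue class of $a/\pi^l$. *)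

theory Defs
  imports "HOL-Computational_Algebra.Polynomial" "HOL-Computational_Algebra.Primes"
begin

text \<open>A normalized discrete valuation on a field. The value at 0 (conventionally infinity)
  is never used: every condition is guarded by nonzeroness.\<close>
definition discrete_valuation :: "('a::field \<Rightarrow> int) \<Rightarrow> bool" where
  "discrete_valuation v \<longleftrightarrow>
     (\<forall>x y. x \<noteq> 0 \<longrightarrow> y \<noteq> 0 \<longrightarrow> v (x * y) = v x + v y) \<and>
     (\<forall>x y. x \<noteq> 0 \<longrightarrow> y \<noteq> 0 \<longrightarrow> x + y \<noteq> 0 \<longrightarrow> v (x + y) \<ge> min (v x) (v y)) \<and>
     (\<exists>u. u \<noteq> 0 \<and> v u = 1)"

definition val_cauchy :: "('a::field \<Rightarrow> int) \<Rightarrow> (nat \<Rightarrow> 'a) \<Rightarrow> bool" where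
  "val_cauchy v s \<longleftrightarrow> (\<forall>N::int. \<exists>M. \<forall>m\<ge>M. \<forall>k\<ge>M. s m = s k \<or> v (s m - s k) \<ge> N)"

definition val_converges :: "('a::field \<Rightarrow> int) \<Rightarrow> (nat \<Rightarrow> 'a) \<Rightarrow> 'a \<Rightarrow> bool" where
  "val_converges v s L \<longleftrightarrow> (\<forall>N::int. \<exists>M. \<forall>m\<ge>M. s m = L \<or> v (s m - L) \<ge> N)"

definition val_complete :: "('a::field \<Rightarrow> int) \<Rightarrow> bool" where
  "val_complete v \<longleftrightarrow> (\<forall>s. val_cauchy v s \<longrightarrow> (\<exists>L. val_converges v s L))"

definition val_ring :: "('a::field \<Rightarrow> int) \<Rightarrow> 'a set" where
  "val_ring v = {x. x = 0 \<or> v x \<ge> 0}"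

definition max_ideal :: "('a::field \<Rightarrow> int) \<Rightarrow> 'a set" where
  "max_ideal v = {x. x = 0 \<or> v x \<ge> 1}"

definition res_rel :: "('a::field \<Rightarrow> int) \<Rightarrow> ('a \<times> 'a) set" where
  "res_rel v = {(x, y). x \<in> val_ring v \<and> y \<in> val_ring v \<and> x - y \<in> max_ideal v}"

definition residue_field :: "('a::field \<Rightarrow> int) \<Rightarrow> 'a set set" where
  "residue_field v = val_ring v // res_rel v"

definition residue :: "('a::field \<Rightarrow> int) \<Rightarrow> 'a \<Rightarrow> 'a set" where
  "residue v x = res_rel v `` {x}"

definition first_digit :: "('a::field \<Rightarrow> int) \<Rightarrow> 'a \<Rightarrow> 'a \<Rightarrow> 'a set" where
  "first_digit v \<pi> a = residue v (a / \<pi> powi v a)"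

text \<open>A residue class c is an n-th power in kappa: c = b^n for some b in kappa
  (the n-th power of the class of b is the class of b^n).\<close>
definition is_nth_power_res :: "('a::field \<Rightarrow> int) \<Rightarrow> nat \<Rightarrow> 'a set \<Rightarrow> bool" where
  "is_nth_power_res v n c \<longleftrightarrow> (\<exists>b \<in> val_ring v. residue v (b ^ n) = c)"

end

theory Submission
  imports Defs "HOL-Algebra.Multiplicative_Group" "HOL-Algebra.QuotRing"
begin

text \<open>
  The slope hypotheses say that the Newton polygon of \<open>f\<close> is the single segment
  from \<open>(0, l)\<close> to \<open>(n, 0)\<close>, so every root \<open>x \<in> K\<^sup>*\<close> has \<open>n v(x) = l\<close>: there are none
  unless \<open>n\<close> divides \<open>l\<close>. If \<open>l = n s\<close>, the substitution \<open>x = \<pi>\<^sup>s y\<close> turns \<open>f\<close> into a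
  polynomial congruent to \<open>y\<^sup>n + u\<close> modulo \<open>\<pi>\<close>, where \<open>u = a\<^sub>0 / \<pi>\<^sup>l\<close> is a unit, and
  the nonzero roots of \<open>f\<close> become the unit roots of that polynomial. As \<open>p\<close> does not
  divide \<open>n\<close>, the roots of \<open>y\<^sup>n + \<delta>(a\<^sub>0)\<close> in \<open>\<kappa>\<close> are simple, so by Hensel's lemma
  reduction modulo \<open>\<pi>\<close> maps the unit roots bijectively onto them; in the cyclic group
  \<open>\<kappa>\<^sup>*\<close> of order \<open>q - 1\<close> there are \<open>gcd(n, q - 1)\<close> of them if \<open>-\<delta>(a\<^sub>0)\<close> is an
  \<open>n\<close>-th power, and none otherwise. The count depends only on \<open>n\<close> and \<open>a\<^sub>0\<close>, and
  \<open>X\<^sup>n + a\<^sub>0\<close> satisfies the same hypotheses.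
\<close>

hide_const (open) up_ring.coeff UnivPoly.monom module.smult

section \<open>Valuations\<close>

text \<open>\<open>val_ge v N x\<close> means \<open>x \<in> \<pi>\<^sup>N A\<close>; unlike \<open>v x \<ge> N\<close> it is meaningful at \<open>x = 0\<close>, where the
  value of \<open>v\<close> is arbitrary.\<close>
definition val_ge :: "('a::field \<Rightarrow> int) \<Rightarrow> int \<Rightarrow> 'a \<Rightarrow> bool" where
  "val_ge v N x \<longleftrightarrow> x = 0 \<or> v x \<ge> N"

lemma val_ring_iff: "x \<in> val_ring v \<longleftrightarrow> val_ge v 0 x"
  by (auto simp: val_ring_def val_ge_def)

lemma max_ideal_iff: "x \<in> max_ideal v \<longleftrightarrow> val_ge v 1 x"
  by (auto simp: max_ideal_def val_ge_def)

lemma val_ge_0 [simp]: "val_ge v N 0"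
  by (simp add: val_ge_def)

lemma val_ge_mono: "M \<le> N \<Longrightarrow> val_ge v N x \<Longrightarrow> val_ge v M x"
  by (auto simp: val_ge_def)

lemma val_ge_1_imp_0: "val_ge v 1 x \<Longrightarrow> val_ge v 0 x"
  by (rule val_ge_mono[of 0 1]) simp

locale valued_field =
  fixes v :: "'a::field \<Rightarrow> int"
  assumes discrete_valuation: "discrete_valuation v"
begin

lemma val_mult: "x \<noteq> 0 \<Longrightarrow> y \<noteq> 0 \<Longrightarrow> v (x * y) = v x + v y"
  using discrete_valuation unfolding discrete_valuation_def by blast

lemma val_add: "x \<noteq> 0 \<Longrightarrow> y \<noteq> 0 \<Longrightarrow> x + y \<noteq> 0 \<Longrightarrow> v (x + y) \<ge> min (v x) (v y)"
  using discrete_valuation unfolding discrete_valuation_def by blast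

lemma val_one [simp]: "v 1 = 0"
  using val_mult[of 1 1] by simp

lemma val_minus [simp]: "v (- x) = v x"
proof (cases "x = 0")
  case False
  have "v (-1) = 0"
    using val_mult[of "-1" "-1"] by simp
  then show ?thesis
    using val_mult[of "-1" x] False by simp
qed simp

lemma val_inverse: "x \<noteq> 0 \<Longrightarrow> v (inverse x) = - v x"
  using val_mult[of x "inverse x"] by simp

lemma val_divide: "x \<noteq> 0 \<Longrightarrow> y \<noteq> 0 \<Longrightarrow> v (x / y) = v x - v y"
  by (simp add: divide_inverse val_mult val_inverse)

lemma val_power: "x \<noteq> 0 \<Longrightarrow> v (x ^ k) = int k * v x"
  by (induction k) (auto simp: val_mult algebra_simps)

lemma val_power_int: "x \<noteq> 0 \<Longrightarrow> v (x powi k) = k * v x"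
  by (auto simp: power_int_def val_power val_inverse)

lemma val_ge_uminus [simp]: "val_ge v N (- x) \<longleftrightarrow> val_ge v N x"
  by (auto simp: val_ge_def)

lemma val_ge_add: "val_ge v N x \<Longrightarrow> val_ge v N y \<Longrightarrow> val_ge v N (x + y)"
  unfolding val_ge_def using val_add[of x y]
  by (cases "x = 0"; cases "y = 0"; cases "x + y = 0") auto

lemma val_ge_diff: "val_ge v N x \<Longrightarrow> val_ge v N y \<Longrightarrow> val_ge v N (x - y)"
  using val_ge_add[of N x "- y"] by simp

lemma val_ge_commute_diff: "val_ge v N (x - y) \<longleftrightarrow> val_ge v N (y - x)"
  using val_ge_uminus[of N "x - y"] by simp

lemma val_ge_iff_diff: "val_ge v N (x - y) \<Longrightarrow> val_ge v N x \<longleftrightarrow> val_ge v N y"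
  using val_ge_add[of N "x - y" y] val_ge_diff[of N x "x - y"] by auto

lemma val_ge_mult: "val_ge v N x \<Longrightarrow> val_ge v M y \<Longrightarrow> val_ge v (N + M) (x * y)"
  unfolding val_ge_def by (cases "x = 0"; cases "y = 0") (auto simp: val_mult)

lemma val_ge_mult_right: "val_ge v N x \<Longrightarrow> val_ge v 0 y \<Longrightarrow> val_ge v N (x * y)"
  using val_ge_mult[of N x 0 y] by simp

lemma val_ge_mult_left: "val_ge v 0 x \<Longrightarrow> val_ge v N y \<Longrightarrow> val_ge v N (x * y)"
  using val_ge_mult[of 0 x N y] by simp

lemma val_ge_sum: "(\<And>i. i \<in> S \<Longrightarrow> val_ge v N (f i)) \<Longrightarrow> val_ge v N (sum f S)"
  by (induction S rule: infinite_finite_induct) (auto intro: val_ge_add)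

lemma val_ge_one [simp]: "val_ge v 0 1"
  by (simp add: val_ge_def)

lemma val_ge_power: "val_ge v 0 x \<Longrightarrow> val_ge v 0 (x ^ k)"
  by (induction k) (auto intro: val_ge_mult_right)

lemma val_ge_power_pos: "val_ge v 1 x \<Longrightarrow> k \<ge> 1 \<Longrightarrow> val_ge v 1 (x ^ k)"
  using val_ge_mult_right[of 1 x "x ^ (k - 1)"] val_ge_power[OF val_ge_1_imp_0]
  by (metis power_eq_if not_one_le_zero)

lemma val_ge_of_nat [simp]: "val_ge v 0 (of_nat k)"
  by (induction k) (auto intro: val_ge_add)

lemma val_ge_of_int [simp]: "val_ge v 0 (of_int k)"
  by (cases k rule: int_cases) (auto simp del: of_nat_Suc)

lemma val_add_eq_left:
  assumes "x \<noteq> 0" "val_ge v (v x + 1) y"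
  shows "x + y \<noteq> 0 \<and> v (x + y) = v x"
proof (cases "y = 0")
  case False
  then have vy: "v y > v x"
    using assms by (auto simp: val_ge_def)
  have nz: "x + y \<noteq> 0"
  proof
    assume "x + y = 0"
    then have "y = - x" by (simp add: eq_neg_iff_add_eq_0 add.commute)
    then show False using vy by simp
  qed
  have "v (x + y) \<ge> v x"
    using val_add[OF assms(1) False nz] vy by simp
  moreover have "v x \<ge> min (v (x + y)) (v (- y))"
    using val_add[OF nz, of "- y"] False assms(1) by simp
  ultimately show ?thesis
    using nz vy by auto
qed (use assms in simp)

lemma unit_add_max_ideal:
  "x \<noteq> 0 \<Longrightarrow> v x = 0 \<Longrightarrow> val_ge v 1 h \<Longrightarrow> x + h \<noteq> 0 \<and> v (x + h) = 0"
  using val_add_eq_left[of x h] by simp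

lemma val_ge_divide_unit: "val_ge v N x \<Longrightarrow> y \<noteq> 0 \<Longrightarrow> v y = 0 \<Longrightarrow> val_ge v N (x / y)"
  by (cases "x = 0") (auto simp: val_ge_def val_divide)

end

section \<open>Hensel's lemma\<close>

definition val_ge_poly :: "('a::field \<Rightarrow> int) \<Rightarrow> int \<Rightarrow> 'a poly \<Rightarrow> bool" where
  "val_ge_poly v N g \<longleftrightarrow> (\<forall>i. val_ge v N (coeff g i))"

lemma val_ge_poly_pCons: "val_ge_poly v N (pCons a g) \<longleftrightarrow> val_ge v N a \<and> val_ge_poly v N g"
  unfolding val_ge_poly_def by (metis coeff_pCons_0 coeff_pCons_Suc not0_implies_Suc)

lemma val_ge_poly_1_imp_0: "val_ge_poly v 1 g \<Longrightarrow> val_ge_poly v 0 g"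
  by (simp add: val_ge_poly_def val_ge_1_imp_0)

lemma val_converges_iff: "val_converges v Y L \<longleftrightarrow> (\<forall>N. \<exists>M. \<forall>m\<ge>M. val_ge v N (Y m - L))"
  unfolding val_converges_def val_ge_def by simp

context valued_field
begin

lemma val_ge_poly_add: "val_ge_poly v N g \<Longrightarrow> val_ge_poly v N h \<Longrightarrow> val_ge_poly v N (g + h)"
  by (simp add: val_ge_poly_def val_ge_add)

lemma poly_val_ge: "val_ge_poly v N g \<Longrightarrow> val_ge v 0 y \<Longrightarrow> val_ge v N (poly g y)"
  by (induction g rule: pCons_induct)
    (auto simp: val_ge_poly_pCons intro!: val_ge_add val_ge_mult_left)

lemma val_ge_poly_pderiv: "val_ge_poly v N g \<Longrightarrow> val_ge_poly v N (pderiv g)"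
  by (auto simp: val_ge_poly_def coeff_pderiv simp del: of_nat_Suc intro!: val_ge_mult_left)

lemma poly_diff_eq_mult:
  assumes "val_ge_poly v 0 g" "val_ge v 0 x" "val_ge v 0 y"
  shows "\<exists>w. val_ge v 0 w \<and> poly g x - poly g y = (x - y) * w"
  using assms(1)
proof (induction g rule: pCons_induct)
  case (pCons a p)
  then obtain w where w: "val_ge v 0 w" "poly p x - poly p y = (x - y) * w"
    by (auto simp: val_ge_poly_pCons)
  then have px: "poly p x = poly p y + (x - y) * w"
    by (simp add: algebra_simps)
  have "poly (pCons a p) x - poly (pCons a p) y = (x - y) * (x * w + poly p y)"
    by (simp add: px algebra_simps)
  moreover have "val_ge v 0 (x * w + poly p y)"
    using pCons.prems assms w by (auto simp: val_ge_poly_pCons intro!: val_ge_add val_ge_mult_left poly_val_ge)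
  ultimately show ?case by blast
qed (auto intro: exI[of _ 0])

lemma poly_taylor_remainder:
  assumes "val_ge_poly v 0 g" "val_ge v 0 x" "val_ge v 0 y"
  shows "\<exists>w. val_ge v 0 w \<and> poly g x - poly g y - poly (pderiv g) y * (x - y) = (x - y)\<^sup>2 * w"
  using assms(1)
proof (induction g rule: pCons_induct)
  case (pCons a p)
  then obtain w where w: "val_ge v 0 w"
    "poly p x - poly p y - poly (pderiv p) y * (x - y) = (x - y)\<^sup>2 * w"
    by (auto simp: val_ge_poly_pCons)
  then have px: "poly p x = poly p y + poly (pderiv p) y * (x - y) + (x - y)\<^sup>2 * w"
    by (simp add: algebra_simps)
  have "poly (pCons a p) x - poly (pCons a p) y - poly (pderiv (pCons a p)) y * (x - y)
      = (x - y)\<^sup>2 * (x * w + poly (pderiv p) y)"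
    by (simp add: pderiv_pCons px) (simp add: algebra_simps power2_eq_square)
  moreover have "val_ge v 0 (x * w + poly (pderiv p) y)"
    using pCons.prems assms w
    by (auto simp: val_ge_poly_pCons intro!: val_ge_add val_ge_mult_left poly_val_ge val_ge_poly_pderiv)
  ultimately show ?case by blast
qed (auto intro: exI[of _ 0])

lemma poly_pderiv_unit_near:
  assumes g: "val_ge_poly v 0 g" and y: "val_ge v 0 y" "val_ge v 0 z" "val_ge v 1 (y - z)"
    and unit: "poly (pderiv g) z \<noteq> 0" "v (poly (pderiv g) z) = 0"
  shows "poly (pderiv g) y \<noteq> 0 \<and> v (poly (pderiv g) y) = 0"
proof -
  obtain w where w: "val_ge v 0 w" "poly (pderiv g) y - poly (pderiv g) z = (y - z) * w"
    using poly_diff_eq_mult[OF val_ge_poly_pderiv[OF g] y(1,2)] by blast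
  then have "poly (pderiv g) y = poly (pderiv g) z + (y - z) * w"
    by (simp add: algebra_simps)
  then show ?thesis
    using unit_add_max_ideal[OF unit val_ge_mult_right[OF y(3) w(1)]] by simp
qed

lemma newton_step:
  assumes g: "val_ge_poly v 0 g" and y: "val_ge v 0 y" and gy: "val_ge v N (poly g y)" and N: "N \<ge> 1"
    and unit: "poly (pderiv g) y \<noteq> 0" "v (poly (pderiv g) y) = 0"
  defines "h \<equiv> - poly g y / poly (pderiv g) y"
  shows "val_ge v N h" "val_ge v (2 * N) (poly g (y + h))"
proof -
  show hN: "val_ge v N h"
    unfolding h_def using val_ge_divide_unit[OF gy unit] by simp
  then have h0: "val_ge v 0 h"
    using val_ge_mono[of 0 N v h] N by simp
  obtain w where w: "val_ge v 0 w"
    "poly g (y + h) - poly g y - poly (pderiv g) y * (y + h - y) = (y + h - y)\<^sup>2 * w"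
    using poly_taylor_remainder[OF g val_ge_add[OF y h0] y] by blast
  have "poly g y + poly (pderiv g) y * h = 0"
    using unit(1) by (simp add: h_def)
  then have "poly g (y + h) = (h * h) * w"
    using w(2) by (simp add: power2_eq_square algebra_simps)
  then show "val_ge v (2 * N) (poly g (y + h))"
    unfolding mult_2 using val_ge_mult_right[OF val_ge_mult[OF hN hN] w(1)] by (simp only:)
qed

lemma val_cauchy_if_steps:
  assumes steps: "\<And>k. val_ge v (int k + 1) (Y (Suc k) - Y k)"
  shows "val_cauchy v Y"
proof -
  have tail: "val_ge v (int M + 1) (Y j - Y M)" if "M \<le> j" for M j
    using that
  proof (induction j rule: dec_induct)
    case (step j)
    have "val_ge v (int M + 1) (Y (Suc j) - Y j)"
      using val_ge_mono[OF _ steps[of j]] step.hyps by simp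
    then have "val_ge v (int M + 1) ((Y j - Y M) + (Y (Suc j) - Y j))"
      by (rule val_ge_add[OF step.IH])
    then show ?case
      by simp
  qed simp
  have "val_ge v N (Y m - Y k)" if "nat N \<le> m" "nat N \<le> k" for N m k
  proof -
    have "val_ge v (int (nat N) + 1) ((Y m - Y (nat N)) - (Y k - Y (nat N)))"
      using val_ge_diff[OF tail[OF that(1)] tail[OF that(2)]] .
    then have "val_ge v (int (nat N) + 1) (Y m - Y k)"
      by simp
    then show ?thesis
      by (rule val_ge_mono[rotated]) simp
  qed
  then have "\<forall>m\<ge>nat N. \<forall>k\<ge>nat N. Y m = Y k \<or> N \<le> v (Y m - Y k)" for N
    by (simp add: val_ge_def)
  then show ?thesis
    unfolding val_cauchy_def by blast
qed

lemma val_ge_limit: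
  assumes L: "val_converges v Y L" and Y: "\<And>k. val_ge v N (Y k - c)"
  shows "val_ge v N (L - c)"
proof -
  obtain M where "val_ge v N (Y M - L)"
    using L unfolding val_converges_iff by blast
  then have "val_ge v N ((Y M - c) - (Y M - L))"
    by (rule val_ge_diff[OF Y])
  then show ?thesis
    by (simp add: algebra_simps)
qed

lemma poly_limit_eq_0:
  assumes g: "val_ge_poly v 0 g" and L: "val_converges v Y L" "val_ge v 0 L"
    and Y: "\<And>k. val_ge v 0 (Y k)" and gY: "\<And>k. val_ge v (int k) (poly g (Y k))"
  shows "poly g L = 0"
proof (rule ccontr)
  assume nz: "poly g L \<noteq> 0"
  define t where "t = v (poly g L)"
  obtain M where M: "\<forall>m\<ge>M. val_ge v (t + 1) (Y m - L)"
    using L(1) unfolding val_converges_iff by blast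
  define m where "m = max M (nat (t + 1))"
  obtain w where w: "val_ge v 0 w" "poly g (Y m) - poly g L = (Y m - L) * w"
    using poly_diff_eq_mult[OF g Y L(2)] by blast
  have "val_ge v (t + 1) (poly g (Y m) - poly g L)"
    unfolding w(2) using val_ge_mult_right[OF M[rule_format] w(1)] by (simp add: m_def)
  moreover have "val_ge v (t + 1) (poly g (Y m))"
    using val_ge_mono[OF _ gY[of m]] by (simp add: m_def)
  ultimately have "val_ge v (t + 1) (poly g L)"
    using val_ge_diff by fastforce
  then show False
    using nz by (simp add: val_ge_def t_def)
qed

lemma newton_iterates:
  assumes g: "val_ge_poly v 0 g" and y0: "val_ge v 0 y0" and gy0: "val_ge v 1 (poly g y0)"
    and unit: "poly (pderiv g) y0 \<noteq> 0" "v (poly (pderiv g) y0) = 0"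
  obtains Y where "\<And>k. val_ge v 0 (Y k)" "\<And>k. val_ge v 1 (Y k - y0)"
    "\<And>k. val_ge v (int k + 1) (poly g (Y k))" "\<And>k. val_ge v (int k + 1) (Y (Suc k) - Y k)"
proof -
  define Y where "Y = rec_nat y0 (\<lambda>_ y. y - poly g y / poly (pderiv g) y)"
  define h where "h k = - poly g (Y k) / poly (pderiv g) (Y k)" for k
  have Y_Suc: "Y (Suc k) = Y k + h k" for k
    by (simp add: Y_def h_def)
  define approx where "approx k \<longleftrightarrow>
    val_ge v 0 (Y k) \<and> val_ge v 1 (Y k - y0) \<and> val_ge v (int k + 1) (poly g (Y k))" for k
  have step: "val_ge v (int k + 1) (h k) \<and> approx (Suc k)" if "approx k" for k
  proof -
    have Yk: "val_ge v 0 (Y k)" "val_ge v 1 (Y k - y0)" "val_ge v (int k + 1) (poly g (Y k))"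
      using that by (simp_all add: approx_def)
    have unit_k: "poly (pderiv g) (Y k) \<noteq> 0" "v (poly (pderiv g) (Y k)) = 0"
      using poly_pderiv_unit_near[OF g Yk(1) y0 Yk(2) unit] by simp_all
    have "1 \<le> int k + 1"
      by simp
    note hk = newton_step[OF g Yk(1,3) this unit_k, folded h_def]
    have "val_ge v 0 (h k)" "val_ge v 1 (h k)"
      using val_ge_mono[OF _ hk(1)] by simp_all
    then have "val_ge v 0 (Y (Suc k))" "val_ge v 1 (Y (Suc k) - y0)"
      using val_ge_add[OF Yk(1)] val_ge_add[OF Yk(2)] by (simp_all add: Y_Suc diff_add_eq)
    moreover have "val_ge v (int (Suc k) + 1) (poly g (Y (Suc k)))"
      using val_ge_mono[OF _ hk(2)] by (simp add: Y_Suc)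
    ultimately show ?thesis
      using hk(1) by (simp add: approx_def)
  qed
  have approx: "approx k" for k
  proof (induction k)
    case 0
    show ?case using y0 gy0 by (simp add: approx_def Y_def)
  next
    case (Suc k)
    then show ?case using step by simp
  qed
  show ?thesis
    by (rule that[of Y]) (use approx step[OF approx] in \<open>simp_all add: approx_def Y_Suc\<close>)
qed

end

locale complete_valued_field = valued_field +
  assumes complete: "val_complete v"
begin

text \<open>Hensel's lemma: the Newton iterates of an approximate simple root form a Cauchy sequence,
  and its limit is a root.\<close>
lemma hensel:
  assumes g: "val_ge_poly v 0 g" and y0: "val_ge v 0 y0" and gy0: "val_ge v 1 (poly g y0)"
    and unit: "poly (pderiv g) y0 \<noteq> 0" "v (poly (pderiv g) y0) = 0"
  shows "\<exists>y. val_ge v 0 y \<and> val_ge v 1 (y - y0) \<and> poly g y = 0"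
proof -
  obtain Y where Y: "\<And>k. val_ge v 0 (Y k)" "\<And>k. val_ge v 1 (Y k - y0)"
    "\<And>k. val_ge v (int k + 1) (poly g (Y k))" "\<And>k. val_ge v (int k + 1) (Y (Suc k) - Y k)"
    using newton_iterates[OF g y0 gy0 unit] by blast
  obtain L where L: "val_converges v Y L"
    using complete val_cauchy_if_steps[OF Y(4)] unfolding val_complete_def by blast
  have L0: "val_ge v 0 L"
    using val_ge_limit[OF L, of 0 0] Y(1) by simp
  have L1: "val_ge v 1 (L - y0)"
    using val_ge_limit[OF L Y(2)] .
  have "val_ge v (int k) (poly g (Y k))" for k
    using val_ge_mono[OF _ Y(3)[of k]] by simp
  then have "poly g L = 0"
    by (rule poly_limit_eq_0[OF g L L0 Y(1)])
  then show ?thesis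
    using L0 L1 by blast
qed

lemma hensel_unique:
  assumes g: "val_ge_poly v 0 g" and yz: "val_ge v 0 y" "val_ge v 0 z" "val_ge v 1 (y - z)"
    and roots: "poly g y = 0" "poly g z = 0"
    and unit: "poly (pderiv g) z \<noteq> 0" "v (poly (pderiv g) z) = 0"
  shows "y = z"
proof -
  obtain w where w: "val_ge v 0 w" "poly g y - poly g z - poly (pderiv g) z * (y - z) = (y - z)\<^sup>2 * w"
    using poly_taylor_remainder[OF g yz(1,2)] by blast
  then have "(y - z) * (poly (pderiv g) z + (y - z) * w) = 0"
    using roots by (simp add: algebra_simps power2_eq_square)
  moreover have "poly (pderiv g) z + (y - z) * w \<noteq> 0"
    using unit_add_max_ideal[OF unit val_ge_mult_right[OF yz(3) w(1)]] by simp
  ultimately show ?thesis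
    by simp
qed

end

section \<open>Pure polynomials\<close>

text \<open>Monic integral polynomials whose Newton polygon is the single segment from \<open>(0, v a\<^sub>0)\<close>
  to \<open>(n, 0)\<close>: every other vertex lies strictly above it.\<close>
definition pure_poly :: "('a::field \<Rightarrow> int) \<Rightarrow> nat \<Rightarrow> 'a poly \<Rightarrow> bool" where
  "pure_poly v n f \<longleftrightarrow> n \<ge> 1 \<and> degree f = n \<and> coeff f n = 1 \<and> val_ge_poly v 0 f \<and>
     coeff f 0 \<noteq> 0 \<and>
     (\<forall>j. 0 < j \<longrightarrow> j < n \<longrightarrow> coeff f j = 0 \<or> int (n - j) * v (coeff f 0) < int n * v (coeff f j))"

lemma middle_term_above_min:
  fixes n j :: nat and c l t :: int
  assumes "j < n" "int (n - j) * l < int n * c"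
  shows "min l (int n * t) < c + int j * t"
proof -
  define m where "m = min l (int n * t)"
  have "int (n - j) * m \<le> int (n - j) * l" "int j * m \<le> int j * (int n * t)"
    by (simp_all add: m_def mult_left_mono)
  moreover have "int n * m = int (n - j) * m + int j * m"
    using assms(1) by (simp add: of_nat_diff algebra_simps)
  ultimately have "int n * m < int n * (c + int j * t)"
    using assms(2) by (simp add: algebra_simps)
  then show ?thesis
    unfolding m_def by (rule mult_left_less_imp_less) simp
qed

context valued_field
begin

lemma pure_poly_binomial:
  assumes "n \<ge> 1" "a \<noteq> 0" "val_ge v 0 a"
  shows "pure_poly v n (monom 1 n + [:a:])"
proof -
  have c: "coeff (monom 1 n + [:a:]) j = (if j = n then 1 else 0) + (if j = 0 then a else 0)" for j
    by (simp add: coeff_pCons split: nat.split)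
  have "degree (monom 1 n + [:a:]) = n"
    using assms(1) by (simp add: degree_add_eq_left degree_monom_eq)
  then show ?thesis
    using assms unfolding pure_poly_def val_ge_poly_def c by auto
qed

lemma sum_nonzero_if_dominant:
  assumes "finite S" "i \<in> S" "F i \<noteq> 0" "\<And>j. j \<in> S - {i} \<Longrightarrow> val_ge v (v (F i) + 1) (F j)"
  shows "sum F S \<noteq> 0"
proof -
  have "sum F S = F i + sum F (S - {i})"
    using assms(1,2) by (simp add: sum.remove)
  moreover have "val_ge v (v (F i) + 1) (sum F (S - {i}))"
    by (rule val_ge_sum) (use assms(4) in blast)
  ultimately show ?thesis
    using val_add_eq_left[OF assms(3)] by simp
qed

text \<open>If \<open>n v(x) \<noteq> v(a\<^sub>0)\<close>, one of the end terms \<open>a\<^sub>0\<close> and \<open>x\<^sup>n\<close> of \<open>f(x)\<close> would have strictly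
  smaller valuation than all the others.\<close>
lemma pure_poly_root_val:
  assumes f: "pure_poly v n f" and x: "x \<noteq> 0" "poly f x = 0"
  shows "int n * v x = v (coeff f 0)"
proof (rule ccontr)
  assume ne: "int n * v x \<noteq> v (coeff f 0)"
  define l where "l = v (coeff f 0)"
  define F where "F j = coeff f j * x ^ j" for j
  define i where "i = (if l < int n * v x then 0 else n)"
  from f have n: "n \<ge> 1" "degree f = n" "coeff f n = 1" "coeff f 0 \<noteq> 0"
    and slope: "\<And>j. 0 < j \<Longrightarrow> j < n \<Longrightarrow> coeff f j \<noteq> 0 \<Longrightarrow>
      int (n - j) * l < int n * v (coeff f j)"
    unfolding pure_poly_def l_def by blast+
  have vF: "v (F j) = v (coeff f j) + int j * v x" if "coeff f j \<noteq> 0" for j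
    using that x(1) by (simp add: F_def val_mult val_power)
  have Fi: "F i \<noteq> 0" "v (F i) = min l (int n * v x)"
    using n x(1) ne vF[of 0] vF[of n] by (auto simp: i_def l_def F_def)
  have "val_ge v (v (F i) + 1) (F j)" if j: "j \<in> {..n} - {i}" for j
  proof (cases "coeff f j = 0")
    case False
    have "min l (int n * v x) < v (F j)"
    proof (cases "0 < j \<and> j < n")
      case True
      then have "int (n - j) * l < int n * v (coeff f j)"
        using slope False by blast
      then show ?thesis
        using middle_term_above_min[of j n l] True vF[OF False] by simp
    next
      case False
      then have "j = 0 \<and> i = n \<or> j = n \<and> i = 0"
        using j n(1) by (auto simp: i_def)
      then show ?thesis
        using ne vF[of 0] vF[of n] n by (auto simp: i_def l_def split: if_splits)
    qed
    then show ?thesis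
      using Fi by (simp add: val_ge_def)
  qed (simp add: F_def)
  then have "sum F {..n} \<noteq> 0"
    using sum_nonzero_if_dominant[of "{..n}" i F] Fi(1) by (simp add: i_def)
  moreover have "poly f x = sum F {..n}"
    by (simp add: F_def poly_altdef n(2))
  ultimately show False
    using x(2) by simp
qed

end

lemma pure_poly_if_slope:
  assumes n: "n \<ge> 1" and monic: "degree f = n" "lead_coeff f = 1"
    and coeffs: "\<forall>i. coeff f i \<in> val_ring v" and a0: "coeff f 0 \<noteq> 0"
    and slope: "\<forall>i\<in>{1..n-1}. coeff f (n - i) = 0 \<or>
                   real_of_int (v (coeff f (n - i))) > real i * real_of_int (v (coeff f 0)) / real n"
  shows "pure_poly v n f"
proof -
  have "coeff f j = 0 \<or> int (n - j) * v (coeff f 0) < int n * v (coeff f j)" if "0 < j" "j < n" for j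
  proof -
    have "n - j \<in> {1..n-1}" "n - (n - j) = j"
      using that by auto
    then have "coeff f j = 0 \<or> real (n - j) * v (coeff f 0) / real n < v (coeff f j)"
      using slope by metis
    moreover have "real (n - j) * v (coeff f 0) / real n < v (coeff f j)
        \<longleftrightarrow> real_of_int (int (n - j) * v (coeff f 0)) < real_of_int (int n * v (coeff f j))"
      using n by (simp add: pos_divide_less_eq mult.commute)
    ultimately show ?thesis
      by (simp only: of_int_less_iff)
  qed
  then show ?thesis
    using assms by (simp add: pure_poly_def val_ge_poly_def val_ring_iff)
qed

section \<open>The residue field\<close>

definition valuation_ring :: "('a::field \<Rightarrow> int) \<Rightarrow> 'a ring" where
  "valuation_ring v = \<lparr>carrier = val_ring v, monoid.mult = (*), one = 1, zero = 0, add = (+)\<rparr>"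

lemma valuation_ring_simps [simp]:
  "carrier (valuation_ring v) = val_ring v" "monoid.mult (valuation_ring v) = (*)"
  "one (valuation_ring v) = 1" "zero (valuation_ring v) = 0" "add (valuation_ring v) = (+)"
  by (simp_all add: valuation_ring_def)

lemma nat_pow_valuation_ring: "x [^]\<^bsub>valuation_ring v\<^esub> (k::nat) = x ^ k"
  by (induction k) simp_all

context valued_field
begin

lemma cring_valuation_ring: "cring (valuation_ring v)"
proof -
  have "\<exists>y\<in>val_ring v. x + y = 0" if "val_ge v 0 x" for x
    using that by (intro bexI[of _ "- x"]) (simp_all add: val_ring_iff)
  then show ?thesis
    by unfold_locales
      (auto simp: val_ring_iff Units_def algebra_simps intro: val_ge_add val_ge_mult_right)
qed

lemma a_inv_valuation_ring: "x \<in> val_ring v \<Longrightarrow> \<ominus>\<^bsub>valuation_ring v\<^esub> x = - x"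
proof -
  interpret cring "valuation_ring v"
    by (rule cring_valuation_ring)
  assume x: "x \<in> val_ring v"
  then have "- x \<in> carrier (valuation_ring v)"
    by (simp add: val_ring_iff)
  then show ?thesis
    using x by (metis minus_equality add.m_comm valuation_ring_simps(1,4,5) right_minus)
qed

lemma max_ideal_subset: "max_ideal v \<subseteq> val_ring v"
  by (auto simp: max_ideal_iff val_ring_iff intro: val_ge_1_imp_0)

lemma ideal_max_ideal: "ideal (max_ideal v) (valuation_ring v)"
proof -
  interpret cring "valuation_ring v"
    by (rule cring_valuation_ring)
  show ?thesis
  proof (rule idealI)
    show "subgroup (max_ideal v) (add_monoid (valuation_ring v))"
    proof (rule add.subgroupI)
      show "max_ideal v \<noteq> {}"
        using max_ideal_iff[of 0 v] by auto
    qed (use max_ideal_subset a_inv_valuation_ring in \<open>auto simp: max_ideal_iff intro: val_ge_add\<close>)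
  qed (auto simp: max_ideal_iff val_ring_iff intro: val_ge_mult_right val_ge_mult_left ring_axioms)
qed

text \<open>Every element of \<open>A\<close> outside \<open>\<pi>A\<close> is a unit.\<close>
lemma maximalideal_max_ideal: "maximalideal (max_ideal v) (valuation_ring v)"
proof (rule maximalidealI[OF ideal_max_ideal])
  show "carrier (valuation_ring v) \<noteq> max_ideal v"
    using max_ideal_iff[of 1 v] val_ring_iff[of 1 v] by (auto simp: val_ge_def)
next
  fix J assume J: "ideal J (valuation_ring v)" "max_ideal v \<subseteq> J" "J \<subseteq> carrier (valuation_ring v)"
  interpret J: ideal J "valuation_ring v"
    by (rule J(1))
  show "J = max_ideal v \<or> J = carrier (valuation_ring v)"
  proof (cases "J \<subseteq> max_ideal v")
    case False
    then obtain x where x: "x \<in> J" "x \<notin> max_ideal v"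
      by auto
    then have "x \<noteq> 0" "v x = 0"
      using J(3) by (auto simp: max_ideal_iff val_ring_iff val_ge_def)
    then have "x * inverse x \<in> J" "val_ge v 0 (inverse x)"
      using J.I_r_closed[of x "inverse x"] x by (simp_all add: val_ring_iff val_ge_def val_inverse)
    then have "1 \<in> J"
      using \<open>x \<noteq> 0\<close> by simp
    then have "carrier (valuation_ring v) \<subseteq> J"
      using J.I_r_closed[of 1] by auto
    then show ?thesis
      using J by auto
  qed (use J in auto)
qed

text \<open>The quotient ring structure on \<open>\<kappa>\<close>; its carrier is the set \<open>residue_field v\<close> of
  the statement (\<open>carrier_residue_ring\<close>).\<close>
abbreviation residue_ring :: "'a set ring" ("\<kappa>") where
  "\<kappa> \<equiv> valuation_ring v Quot max_ideal v"

lemma field_residue_ring: "field \<kappa>"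
  by (rule maximalideal.quotient_is_field[OF maximalideal_max_ideal cring_valuation_ring])

lemma residue_eq: "x \<in> val_ring v \<Longrightarrow> residue v x = {y. val_ge v 0 y \<and> val_ge v 1 (x - y)}"
  by (auto simp: residue_def res_rel_def val_ring_iff max_ideal_iff)

lemma rcoset_max_ideal_eq_residue:
  assumes x: "x \<in> val_ring v"
  shows "max_ideal v +>\<^bsub>valuation_ring v\<^esub> x = residue v x"
proof -
  have "y \<in> residue v x \<longleftrightarrow> (\<exists>h\<in>max_ideal v. y = h + x)" for y
  proof
    assume "y \<in> residue v x"
    then show "\<exists>h\<in>max_ideal v. y = h + x"
      using x by (intro bexI[of _ "y - x"]) (auto simp: residue_eq max_ideal_iff val_ge_commute_diff)
  next
    assume "\<exists>h\<in>max_ideal v. y = h + x"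
    then show "y \<in> residue v x"
      using x val_ge_add[OF val_ge_1_imp_0] by (auto simp: residue_eq max_ideal_iff val_ring_iff)
  qed
  then show ?thesis
    by (auto simp: a_r_coset_def')
qed

lemma carrier_residue_ring: "carrier \<kappa> = residue_field v"
proof -
  have "carrier \<kappa> = (\<Union>a\<in>val_ring v. {max_ideal v +>\<^bsub>valuation_ring v\<^esub> a})"
    by (simp add: FactRing_def A_RCOSETS_def')
  also have "\<dots> = (\<Union>a\<in>val_ring v. {residue v a})"
    using rcoset_max_ideal_eq_residue by simp
  finally show ?thesis
    by (simp add: residue_field_def quotient_def residue_def)
qed

lemma residue_in_carrier: "x \<in> val_ring v \<Longrightarrow> residue v x \<in> carrier \<kappa>"
  by (auto simp: carrier_residue_ring residue_field_def quotient_def residue_def)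

lemma carrier_residue_ringE:
  assumes "Y \<in> carrier \<kappa>"
  obtains y where "y \<in> val_ring v" "Y = residue v y"
  using assms by (auto simp: carrier_residue_ring residue_field_def quotient_def residue_def)

lemma equiv_res_rel: "equiv (val_ring v) (res_rel v)"
proof (rule equivI)
  show "trans (res_rel v)"
    unfolding trans_def res_rel_def max_ideal_iff
    using val_ge_add by fastforce
qed (auto simp: refl_on_def sym_def res_rel_def max_ideal_iff val_ge_commute_diff)

lemma residue_eq_iff:
  assumes "x \<in> val_ring v" "y \<in> val_ring v"
  shows "residue v x = residue v y \<longleftrightarrow> val_ge v 1 (x - y)"
  unfolding residue_def eq_equiv_class_iff[OF equiv_res_rel assms]
  using assms by (simp add: res_rel_def max_ideal_iff)

lemma zero_residue_ring: "\<zero>\<^bsub>\<kappa>\<^esub> = residue v 0"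
  by (auto simp: FactRing_def residue_eq val_ring_iff max_ideal_iff intro: val_ge_1_imp_0)

lemma residue_pow:
  assumes x: "x \<in> val_ring v"
  shows "residue v x [^]\<^bsub>\<kappa>\<^esub> (k::nat) = residue v (x ^ k)"
proof -
  have hom: "ring_hom_ring (valuation_ring v) \<kappa> ((+>\<^bsub>valuation_ring v\<^esub>) (max_ideal v))"
    by (rule ideal.rcos_ring_hom_ring[OF ideal_max_ideal])
  have "max_ideal v +>\<^bsub>valuation_ring v\<^esub> (x ^ k)
      = (max_ideal v +>\<^bsub>valuation_ring v\<^esub> x) [^]\<^bsub>\<kappa>\<^esub> k"
    using ring_hom_ring.hom_nat_pow[OF hom, of x k] x by (simp add: nat_pow_valuation_ring)
  moreover have "x ^ k \<in> val_ring v"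
    using x val_ge_power by (simp add: val_ring_iff)
  ultimately show ?thesis
    using x by (simp add: rcoset_max_ideal_eq_residue)
qed

lemma is_nth_power_res_iff:
  "is_nth_power_res v n C \<longleftrightarrow> (\<exists>B\<in>carrier \<kappa>. B [^]\<^bsub>\<kappa>\<^esub> n = C)"
  unfolding is_nth_power_res_def
  by (metis carrier_residue_ringE residue_in_carrier residue_pow)

lemma of_nat_notin_max_ideal:
  assumes p: "prime p" "of_nat p \<in> max_ideal v" and "\<not> p dvd n"
  shows "of_nat n \<notin> max_ideal v"
proof
  assume "of_nat n \<in> max_ideal v"
  have "coprime p n"
    by (rule prime_imp_coprime[OF p(1) assms(3)])
  then have "gcd (int p) (int n) = 1"
    by (simp add: coprime_iff_gcd_eq_1 gcd_int_int_eq)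
  then obtain x y where "x * int p + y * int n = 1"
    using bezout_int[of "int p" "int n"] by metis
  then have "(1::'a) = of_int (x * int p + y * int n)"
    by simp
  then have "(1::'a) = of_int x * of_nat p + of_int y * of_nat n"
    by simp
  moreover have "val_ge v 1 (of_int x * of_nat p + of_int y * (of_nat n :: 'a))"
    using p(2) \<open>of_nat n \<in> max_ideal v\<close> by (auto simp: max_ideal_iff intro!: val_ge_add val_ge_mult_left)
  ultimately show False
    by (simp add: val_ge_def)
qed

end

section \<open>Roots of unity in finite fields\<close>

lemma dvd_mult_iff_div_gcd_dvd:
  fixes m n i :: nat
  assumes "m > 0"
  shows "m dvd i * n \<longleftrightarrow> m div gcd n m dvd i"
proof -
  define d where "d = gcd n m"
  have "d > 0"
    using assms by (simp add: d_def)
  have eq: "d * (m div d) = m" "d * (n div d) = n"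
    by (simp_all add: d_def)
  have "coprime (n div d) (m div d)"
    using div_gcd_coprime[of n m] assms by (simp add: d_def)
  have "m dvd i * n \<longleftrightarrow> d * (m div d) dvd d * (i * (n div d))"
    by (simp only: eq mult.left_commute[of d i])
  also have "\<dots> \<longleftrightarrow> m div d dvd i * (n div d)"
    using \<open>d > 0\<close> by simp
  also have "\<dots> \<longleftrightarrow> m div d dvd i"
    using \<open>coprime (n div d) (m div d)\<close> by (simp add: coprime_commute coprime_dvd_mult_left_iff)
  finally show ?thesis
    by (simp add: d_def)
qed

lemma card_lessThan_dvd:
  fixes k m :: nat
  assumes "k dvd m" "k > 0"
  shows "card {i \<in> {..<m}. k dvd i} = m div k"
proof -
  obtain q where m: "m = q * k"
    using assms(1) by (metis dvdE mult.commute)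
  have "{i \<in> {..<m}. k dvd i} = (\<lambda>j. j * k) ` {..<q}"
  proof (intro Set.set_eqI iffI)
    fix i assume i: "i \<in> {i \<in> {..<m}. k dvd i}"
    then obtain j where j: "i = j * k"
      by (metis dvdE mem_Collect_eq mult.commute)
    then have "j < q"
      using i m by simp
    then show "i \<in> (\<lambda>j. j * k) ` {..<q}"
      using j by blast
  qed (use m assms(2) in auto)
  moreover have "inj_on (\<lambda>j. j * k) {..<q}"
    using assms(2) by (simp add: inj_on_def)
  ultimately show ?thesis
    using assms(2) by (simp add: card_image m)
qed

lemma card_lessThan_dvd_mult:
  fixes m n :: nat
  assumes m: "m > 0"
  shows "card {i \<in> {..<m}. m dvd i * n} = gcd n m"
proof -
  have "card {i \<in> {..<m}. m dvd i * n} = card {i \<in> {..<m}. m div gcd n m dvd i}"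
    using dvd_mult_iff_div_gcd_dvd[OF m, of _ n] by simp
  also have "\<dots> = m div (m div gcd n m)"
    using m by (intro card_lessThan_dvd) (simp_all add: div_dvd_iff_mult div_greater_zero_iff)
  also have "\<dots> = gcd n m"
    using m by (simp add: div_div_eq_right)
  finally show ?thesis .
qed

lemma card_roots_of_unity_finite_field:
  fixes F (structure)
  assumes "field F" "finite (carrier F)" "n \<ge> 1"
  shows "card {Z \<in> carrier F. Z [^] n = \<one>} = gcd n (order F - 1)"
proof -
  interpret field F by (rule assms(1))
  interpret G: group "mult_of F" by (rule field_mult_group)
  obtain a where a: "a \<in> carrier (mult_of F)"
    and gen: "carrier (mult_of F) = {a [^] i | i::nat. i \<in> UNIV}"
    using finite_field_mult_group_has_gen[OF assms(2)] by blast
  have fin: "finite (carrier (mult_of F))"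
    using assms(2) by simp
  have pow: "x [^]\<^bsub>mult_of F\<^esub> (k::nat) = x [^] k" for x k
    by (simp add: nat_pow_mult_of)
  define m where "m = G.ord a"
  have m: "m \<ge> 1"
    using G.ord_ge_1[OF fin a] by (simp add: m_def)
  have carrier: "carrier (mult_of F) = (\<lambda>i. a [^] i) ` {..<m}"
    using gen G.ord_elems[OF fin a] m by (auto simp: pow m_def)
  have inj: "inj_on (\<lambda>i. a [^] i) {..<m}"
    using G.ord_inj[OF a] m by (simp add: pow m_def atLeast0AtMost lessThan_Suc_atMost[symmetric])
  have "order (mult_of F) = m"
    unfolding order_def carrier using card_image[OF inj] by simp
  then have "m = order F - 1"
    using order_mult_of[OF assms(2)] by simp
  have a': "a \<in> carrier F"
    using a by simp
  have ord: "a [^] (i * n) = \<one> \<longleftrightarrow> m dvd i * n" for i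
    using G.pow_eq_id[OF a] by (simp add: pow m_def)
  have "{Z \<in> carrier F. Z [^] n = \<one>} = (\<lambda>i. a [^] i) ` {i \<in> {..<m}. m dvd i * n}"
  proof (intro Set.set_eqI iffI)
    fix Z assume Z: "Z \<in> {Z \<in> carrier F. Z [^] n = \<one>}"
    then have "Z \<in> carrier (mult_of F)"
      using assms(3) nat_pow_zero[of n] by auto
    then obtain i where "i < m" "Z = a [^] i"
      using carrier by auto
    then show "Z \<in> (\<lambda>i. a [^] i) ` {i \<in> {..<m}. m dvd i * n}"
      using Z ord a' by (auto simp: nat_pow_pow)
  next
    fix Z assume "Z \<in> (\<lambda>i. a [^] i) ` {i \<in> {..<m}. m dvd i * n}"
    then show "Z \<in> {Z \<in> carrier F. Z [^] n = \<one>}"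
      using ord a' by (auto simp: nat_pow_pow)
  qed
  also have "card \<dots> = card {i \<in> {..<m}. m dvd i * n}"
    by (rule card_image[OF inj_on_subset[OF inj]]) auto
  also have "\<dots> = gcd n m"
    using card_lessThan_dvd_mult[of m n] m by simp
  finally show ?thesis
    using \<open>m = order F - 1\<close> by simp
qed

lemma card_nth_roots_finite_field:
  fixes F (structure)
  assumes F: "field F" "finite (carrier F)" and n: "n \<ge> 1" and C: "C \<in> carrier F" "C \<noteq> \<zero>"
  shows "card {Y \<in> carrier F. Y [^] n = C} =
    (if \<exists>B\<in>carrier F. B [^] n = C then gcd n (order F - 1) else 0)"
proof (cases "\<exists>B\<in>carrier F. B [^] n = C")
  case True
  interpret field F by (rule F(1))
  from True obtain B where B: "B \<in> carrier F" "B [^] n = C"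
    by blast
  have "B \<noteq> \<zero>"
    using B C n nat_pow_zero[of n] by auto
  then have BU: "B \<in> Units F" "inv B \<in> carrier F"
    using B field_Units by auto
  have "{Y \<in> carrier F. Y [^] n = C} = (\<lambda>Z. Z \<otimes> B) ` {Z \<in> carrier F. Z [^] n = \<one>}"
  proof (intro Set.set_eqI iffI)
    fix Y assume Y: "Y \<in> {Y \<in> carrier F. Y [^] n = C}"
    have "(Y \<otimes> inv B) [^] n = Y [^] n \<otimes> inv B [^] n"
      using Y BU by (simp add: pow_mult_distrib m_comm)
    also have "\<dots> = B [^] n \<otimes> inv B [^] n"
      using Y B by simp
    also have "\<dots> = (B \<otimes> inv B) [^] n"
      by (rule pow_mult_distrib[symmetric]) (use B BU in \<open>simp_all add: m_comm\<close>)
    finally have "(Y \<otimes> inv B) [^] n = \<one>"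
      using BU by simp
    moreover have "Y = (Y \<otimes> inv B) \<otimes> B"
      using Y B BU by (simp add: m_assoc)
    ultimately show "Y \<in> (\<lambda>Z. Z \<otimes> B) ` {Z \<in> carrier F. Z [^] n = \<one>}"
      using Y BU by blast
  qed (use B C in \<open>auto simp: pow_mult_distrib m_comm\<close>)
  moreover have "inj_on (\<lambda>Z. Z \<otimes> B) {Z \<in> carrier F. Z [^] n = \<one>}"
    using m_rcancel[OF \<open>B \<noteq> \<zero>\<close> B(1)] by (auto intro: inj_onI)
  ultimately have "card {Y \<in> carrier F. Y [^] n = C} = card {Z \<in> carrier F. Z [^] n = \<one>}"
    by (simp add: card_image)
  then show ?thesis
    using card_roots_of_unity_finite_field[OF F n] True by simp
next
  case False
  then have "{Y \<in> carrier F. Y [^] n = C} = {}"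
    by blast
  then have "card {Y \<in> carrier F. Y [^] n = C} = 0"
    by (simp only: card.empty)
  with False show ?thesis
    by simp
qed

section \<open>Counting the roots\<close>

context valued_field
begin

lemma pure_poly_rescale:
  assumes f: "pure_poly v n f" and e: "e \<noteq> 0" "int n * v e = v (coeff f 0)"
  shows "val_ge_poly v 1
    (smult (inverse (e ^ n)) (pcompose f [:0, e:]) - (monom 1 n + [:coeff f 0 / e ^ n:]))"
    (is "val_ge_poly v 1 ?D")
proof -
  from f have n: "n \<ge> 1" "degree f = n" "coeff f n = 1"
    and slope: "\<And>j. 0 < j \<Longrightarrow> j < n \<Longrightarrow> coeff f j \<noteq> 0 \<Longrightarrow>
      int (n - j) * v (coeff f 0) < int n * v (coeff f j)"
    unfolding pure_poly_def by blast+
  have c: "coeff ?D j = coeff f j * e ^ j / e ^ n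
      - ((if j = n then 1 else 0) + (if j = 0 then coeff f 0 / e ^ n else 0))" for j
    by (simp add: coeff_pcompose_linear coeff_pCons field_simps split: nat.split)
  have middle: "val_ge v 1 (coeff f j * e ^ j / e ^ n)" if j: "0 < j" "j < n" for j
  proof (cases "coeff f j = 0")
    case False
    have "int n * ((int n - int j) * v e) < int n * v (coeff f j)"
      using slope[OF j False] e(2) j by (simp add: of_nat_diff algebra_simps)
    then have "(int n - int j) * v e < v (coeff f j)"
      by (rule mult_left_less_imp_less) simp
    moreover have "v (coeff f j * e ^ j / e ^ n) = v (coeff f j) + int j * v e - int n * v e"
      using False e(1) by (simp add: val_divide val_mult val_power)
    ultimately show ?thesis
      by (simp add: val_ge_def algebra_simps)
  qed simp
  have "val_ge v 1 (coeff ?D j)" for j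
  proof -
    consider "n < j" | "j = n" | "j = 0" | "0 < j" "j < n"
      by linarith
    then show ?thesis
      unfolding c by cases (use n e(1) middle in \<open>auto simp: coeff_eq_0\<close>)
  qed
  then show ?thesis
    by (simp add: val_ge_poly_def)
qed

lemma nonzero_roots_pure_poly_rescale:
  assumes f: "pure_poly v n f" and e: "e \<noteq> 0" "int n * v e = v (coeff f 0)"
  shows "{x. x \<noteq> 0 \<and> poly f x = 0} = (\<lambda>y. e * y) `
    {y. y \<noteq> 0 \<and> v y = 0 \<and> poly (smult (inverse (e ^ n)) (pcompose f [:0, e:])) y = 0}"
proof (intro Set.set_eqI iffI)
  fix x assume "x \<in> {x. x \<noteq> 0 \<and> poly f x = 0}"
  then have x: "x \<noteq> 0" "poly f x = 0"
    by simp_all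
  have "int n * v x = int n * v e" "n \<ge> 1"
    using pure_poly_root_val[OF f x] e(2) f by (simp_all add: pure_poly_def)
  then have "v (x / e) = 0"
    using x(1) e(1) by (simp add: val_divide)
  moreover have "x = e * (x / e)"
    using e(1) by simp
  ultimately show "x \<in> (\<lambda>y. e * y) `
      {y. y \<noteq> 0 \<and> v y = 0 \<and> poly (smult (inverse (e ^ n)) (pcompose f [:0, e:])) y = 0}"
    using x e(1) by (auto simp: poly_pcompose intro!: image_eqI[of x _ "x / e"])
qed (use e(1) in \<open>auto simp: poly_pcompose mult.commute\<close>)

lemma binomial_reduction:
  assumes gh: "val_ge_poly v 1 (g - (monom 1 n + [:u:]))" and u: "val_ge v 0 u"
  shows "val_ge_poly v 0 g"
    and "val_ge v 0 y \<Longrightarrow> val_ge v 1 (poly g y - (y ^ n + u))"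
    and "val_ge v 0 y \<Longrightarrow> val_ge v 1 (poly (pderiv g) y - of_nat n * y ^ (n - 1))"
proof -
  have h: "val_ge_poly v 0 (monom 1 n)" "val_ge_poly v 0 [:u:]"
    using u by (simp_all add: val_ge_poly_pCons val_ge_poly_def[of _ _ 0]
        val_ge_poly_def[of _ _ "monom _ _"])
  have "val_ge_poly v 0 ((g - (monom 1 n + [:u:])) + (monom 1 n + [:u:]))"
    using val_ge_poly_add[OF val_ge_poly_1_imp_0[OF gh] val_ge_poly_add[OF h]] .
  then show "val_ge_poly v 0 g"
    by simp
next
  assume "val_ge v 0 y"
  then show "val_ge v 1 (poly g y - (y ^ n + u))"
    using poly_val_ge[OF gh] by (simp add: poly_monom)
  show "val_ge v 1 (poly (pderiv g) y - of_nat n * y ^ (n - 1))"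
    using poly_val_ge[OF val_ge_poly_pderiv[OF gh]] \<open>val_ge v 0 y\<close>
    by (simp add: pderiv_diff pderiv_add pderiv_monom pderiv_pCons poly_monom)
qed

lemma binomial_reduction_pderiv_unit:
  assumes gh: "val_ge_poly v 1 (g - (monom 1 n + [:u:]))" "val_ge v 0 u"
    and n: "of_nat n \<notin> max_ideal v" and y: "y \<noteq> 0" "v y = 0"
  shows "poly (pderiv g) y \<noteq> 0" "v (poly (pderiv g) y) = 0"
proof -
  have "of_nat n \<noteq> (0::'a)" "v (of_nat n :: 'a) = 0"
    using n val_ge_of_nat[of n] by (auto simp: max_ideal_iff val_ge_def)
  then have "of_nat n * y ^ (n - 1) \<noteq> 0" "v (of_nat n * y ^ (n - 1)) = 0"
    using y by (simp_all add: val_mult val_power)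
  moreover have "val_ge v 1 (poly (pderiv g) y - of_nat n * y ^ (n - 1))"
    using binomial_reduction(3)[OF gh] y by (simp add: val_ge_def)
  ultimately have "of_nat n * y ^ (n - 1) + (poly (pderiv g) y - of_nat n * y ^ (n - 1)) \<noteq> 0
      \<and> v (of_nat n * y ^ (n - 1) + (poly (pderiv g) y - of_nat n * y ^ (n - 1))) = 0"
    by (rule unit_add_max_ideal)
  then show "poly (pderiv g) y \<noteq> 0" "v (poly (pderiv g) y) = 0"
    by simp_all
qed

lemma binomial_reduction_residue_root:
  assumes gh: "val_ge_poly v 1 (g - (monom 1 n + [:u:]))" and u: "u \<noteq> 0" "v u = 0"
    and n: "n \<ge> 1" and y: "y \<in> val_ring v"
  shows "residue v y [^]\<^bsub>\<kappa>\<^esub> n = residue v (- u) \<longleftrightarrow> val_ge v 1 (poly g y)"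
    and "val_ge v 1 (poly g y) \<Longrightarrow> y \<noteq> 0 \<and> v y = 0"
proof -
  have "- u \<in> val_ring v" "y ^ n \<in> val_ring v"
    using u y val_ge_power by (simp_all add: val_ring_iff val_ge_def)
  then have "residue v y [^]\<^bsub>\<kappa>\<^esub> n = residue v (- u) \<longleftrightarrow> val_ge v 1 (y ^ n + u)"
    by (simp add: residue_pow[OF y] residue_eq_iff)
  moreover have "val_ge v 1 (poly g y - (y ^ n + u))"
    using binomial_reduction(2)[OF gh] u y by (simp add: val_ring_iff val_ge_def)
  ultimately show "residue v y [^]\<^bsub>\<kappa>\<^esub> n = residue v (- u) \<longleftrightarrow> val_ge v 1 (poly g y)"
    using val_ge_iff_diff by blast
  assume "val_ge v 1 (poly g y)"
  with \<open>val_ge v 1 (poly g y - (y ^ n + u))\<close> have "val_ge v 1 (y ^ n + u)"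
    using val_ge_iff_diff by blast
  show "y \<noteq> 0 \<and> v y = 0"
  proof (rule ccontr)
    assume "\<not> (y \<noteq> 0 \<and> v y = 0)"
    then have "val_ge v 1 (y ^ n)"
      using y n val_ge_power_pos by (force simp: val_ring_iff val_ge_def)
    then have "val_ge v 1 (y ^ n + u - y ^ n)"
      using val_ge_diff \<open>val_ge v 1 (y ^ n + u)\<close> by blast
    then show False
      using u by (simp add: val_ge_def)
  qed
qed

end

context complete_valued_field
begin

lemma binomial_reduction_lift_root:
  assumes gh: "val_ge_poly v 1 (g - (monom 1 n + [:u:]))" and u: "u \<noteq> 0" "v u = 0"
    and n: "n \<ge> 1" "of_nat n \<notin> max_ideal v"
    and Y: "Y \<in> carrier \<kappa>" "Y [^]\<^bsub>\<kappa>\<^esub> n = residue v (- u)"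
  obtains y where "y \<noteq> 0" "v y = 0" "poly g y = 0" "residue v y = Y"
proof -
  have u0: "val_ge v 0 u"
    using u by (simp add: val_ge_def)
  obtain y0 where y0: "y0 \<in> val_ring v" "Y = residue v y0"
    using Y(1) by (rule carrier_residue_ringE)
  then have gy0: "val_ge v 1 (poly g y0)"
    using Y(2) binomial_reduction_residue_root(1)[OF gh u n(1) y0(1)] by simp
  then have y0_unit: "y0 \<noteq> 0" "v y0 = 0"
    using binomial_reduction_residue_root(2)[OF gh u n(1) y0(1)] by simp_all
  obtain y where y: "val_ge v 0 y" "val_ge v 1 (y - y0)" "poly g y = 0"
    using hensel[OF binomial_reduction(1)[OF gh u0] _ gy0
        binomial_reduction_pderiv_unit[OF gh u0 n(2) y0_unit]] y0(1)
    by (auto simp: val_ring_iff)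
  have "y \<noteq> 0" "v y = 0"
    using unit_add_max_ideal[OF y0_unit y(2)] by simp_all
  moreover have "residue v y = Y"
    using y0 y(1,2) residue_eq_iff by (simp add: val_ring_iff)
  ultimately show ?thesis
    using that y(3) by simp
qed

text \<open>The roots of the reduction of \<open>X\<^sup>n + u\<close> in \<open>\<kappa>\<close> are simple because \<open>n\<close> is a unit, so by
  Hensel's lemma reduction is a bijection from the unit roots of any lift \<open>g\<close> onto them.\<close>
lemma card_unit_roots_binomial_reduction:
  assumes gh: "val_ge_poly v 1 (g - (monom 1 n + [:u:]))" and u: "u \<noteq> 0" "v u = 0"
    and n: "n \<ge> 1" "of_nat n \<notin> max_ideal v"
  shows "card {y. y \<noteq> 0 \<and> v y = 0 \<and> poly g y = 0}
    = card {Y \<in> carrier \<kappa>. Y [^]\<^bsub>\<kappa>\<^esub> n = residue v (- u)}"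
proof -
  have u0: "val_ge v 0 u"
    using u by (simp add: val_ge_def)
  have unit_ring: "y \<in> val_ring v" if "y \<noteq> 0" "v y = 0" for y
    using that by (simp add: val_ring_iff val_ge_def)
  have "inj_on (residue v) {y. y \<noteq> 0 \<and> v y = 0 \<and> poly g y = 0}"
  proof (rule inj_onI)
    fix y z assume "y \<in> {y. y \<noteq> 0 \<and> v y = 0 \<and> poly g y = 0}"
      and "z \<in> {y. y \<noteq> 0 \<and> v y = 0 \<and> poly g y = 0}" and yz: "residue v y = residue v z"
    then have y: "y \<noteq> 0" "v y = 0" "poly g y = 0" and z: "z \<noteq> 0" "v z = 0" "poly g z = 0"
      by simp_all
    then have "val_ge v 1 (y - z)"
      using yz unit_ring residue_eq_iff by simp
    moreover have "val_ge v 0 y" "val_ge v 0 z"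
      using y z by (simp_all add: val_ge_def)
    ultimately show "y = z"
      using hensel_unique[OF binomial_reduction(1)[OF gh u0] _ _ _ y(3) z(3)
          binomial_reduction_pderiv_unit[OF gh u0 n(2) z(1,2)]]
      by simp
  qed
  moreover have "residue v ` {y. y \<noteq> 0 \<and> v y = 0 \<and> poly g y = 0}
      = {Y \<in> carrier \<kappa>. Y [^]\<^bsub>\<kappa>\<^esub> n = residue v (- u)}"
  proof (intro Set.set_eqI iffI)
    fix Y assume "Y \<in> residue v ` {y. y \<noteq> 0 \<and> v y = 0 \<and> poly g y = 0}"
    then obtain y where y: "y \<noteq> 0" "v y = 0" "poly g y = 0" "Y = residue v y"
      by blast
    then have "y \<in> val_ring v"
      using unit_ring by blast
    then show "Y \<in> {Y \<in> carrier \<kappa>. Y [^]\<^bsub>\<kappa>\<^esub> n = residue v (- u)}"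
      using binomial_reduction_residue_root(1)[OF gh u n(1)] residue_in_carrier y by simp
  next
    fix Y assume "Y \<in> {Y \<in> carrier \<kappa>. Y [^]\<^bsub>\<kappa>\<^esub> n = residue v (- u)}"
    then obtain y where "y \<noteq> 0" "v y = 0" "poly g y = 0" "residue v y = Y"
      using binomial_reduction_lift_root[OF gh u n] by blast
    then show "Y \<in> residue v ` {y. y \<noteq> 0 \<and> v y = 0 \<and> poly g y = 0}"
      by blast
  qed
  ultimately show ?thesis
    using card_image by fastforce
qed

lemma card_nonzero_roots_pure_poly_dvd:
  assumes f: "pure_poly v n f" and unif: "\<pi> \<noteq> 0" "v \<pi> = 1"
    and n: "of_nat n \<notin> max_ideal v" and dvd: "int n dvd v (coeff f 0)"
  shows "card {x. x \<noteq> 0 \<and> poly f x = 0}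
    = card {Y \<in> carrier \<kappa>. Y [^]\<^bsub>\<kappa>\<^esub> n = residue v (- (coeff f 0 / \<pi> powi v (coeff f 0)))}"
proof -
  define a where "a = coeff f 0"
  obtain s where s: "v a = int n * s"
    using dvd by (auto simp: a_def elim!: dvdE)
  define e where "e = \<pi> powi s"
  define g where "g = smult (inverse (e ^ n)) (pcompose f [:0, e:])"
  have n1: "n \<ge> 1" and a: "a \<noteq> 0"
    using f by (simp_all add: pure_poly_def a_def)
  have e: "e \<noteq> 0" "v e = s" "e ^ n = \<pi> powi v a"
    using unif by (simp_all add: e_def val_power_int s power_int_power' mult.commute)
  have ve: "int n * v e = v (coeff f 0)"
    using e(2) s by (simp add: a_def)
  have u: "a / e ^ n \<noteq> 0" "v (a / e ^ n) = 0"
    using a e(1,2) by (simp_all add: val_divide val_power s)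
  have "card {x. x \<noteq> 0 \<and> poly f x = 0} = card {y. y \<noteq> 0 \<and> v y = 0 \<and> poly g y = 0}"
    unfolding g_def nonzero_roots_pure_poly_rescale[OF f e(1) ve]
    using e(1) by (simp add: card_image inj_on_def)
  also have "\<dots> = card {Y \<in> carrier \<kappa>. Y [^]\<^bsub>\<kappa>\<^esub> n = residue v (- (a / e ^ n))}"
    using pure_poly_rescale[OF f e(1) ve]
    by (intro card_unit_roots_binomial_reduction[OF _ u n1 n]) (simp add: g_def a_def)
  finally show ?thesis
    by (simp add: e(3) a_def)
qed

lemma card_nonzero_roots_pure_poly:
  assumes f: "pure_poly v n f" and unif: "\<pi> \<noteq> 0" "v \<pi> = 1"
    and n: "of_nat n \<notin> max_ideal v" and fin: "finite (residue_field v)"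
  shows "card {x. x \<noteq> 0 \<and> poly f x = 0} =
    (if int n dvd v (coeff f 0)
        \<and> is_nth_power_res v n (residue v (- (coeff f 0 / \<pi> powi v (coeff f 0))))
     then gcd n (card (residue_field v) - 1) else 0)"
proof (cases "int n dvd v (coeff f 0)")
  case True
  define u where "u = coeff f 0 / \<pi> powi v (coeff f 0)"
  have "n \<ge> 1" "coeff f 0 \<noteq> 0"
    using f by (simp_all add: pure_poly_def)
  then have u: "u \<noteq> 0" "v u = 0" "- u \<in> val_ring v"
    using unif by (simp_all add: u_def val_divide val_power_int val_ring_iff val_ge_def)
  have "residue v (- u) \<noteq> \<zero>\<^bsub>\<kappa>\<^esub>"
    using u residue_eq_iff[of "- u" 0] by (simp add: zero_residue_ring val_ring_iff val_ge_def)
  then have "card {Y \<in> carrier \<kappa>. Y [^]\<^bsub>\<kappa>\<^esub> n = residue v (- u)}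
      = (if is_nth_power_res v n (residue v (- u)) then gcd n (card (residue_field v) - 1) else 0)"
    using card_nth_roots_finite_field[OF field_residue_ring _ \<open>n \<ge> 1\<close> residue_in_carrier[OF u(3)]]
      fin
    by (simp add: carrier_residue_ring is_nth_power_res_iff order_def)
  then show ?thesis
    using card_nonzero_roots_pure_poly_dvd[OF f unif n True] True by (simp add: u_def)
next
  case False
  have "int n dvd v (coeff f 0)" if "x \<noteq> 0" "poly f x = 0" for x
    unfolding pure_poly_root_val[OF f that, symmetric] by simp
  then have "{x. x \<noteq> 0 \<and> poly f x = 0} = {}"
    using False by blast
  then have "card {x. x \<noteq> 0 \<and> poly f x = 0} = 0"
    by (simp only: card.empty)
  with False show ?thesis
    by simp
qed

end

theorem theorem4p5:
  fixes v :: "'a::field \<Rightarrow> int" and \<pi> :: 'a and p q n :: nat and f :: "'a poly"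
  assumes dv: "discrete_valuation v"
    and compl: "val_complete v"
    and unif: "\<pi> \<noteq> 0" "v \<pi> = 1"
    and fin: "finite (residue_field v)"
    and q_def: "q = card (residue_field v)"
    and p_char: "prime p" "of_nat p \<in> max_ideal v"
    and n_pos: "n \<ge> 1"
    and p_ndvd: "\<not> p dvd n"
    and monic: "degree f = n" "lead_coeff f = 1"
    and coeffs_A: "\<forall>i. coeff f i \<in> val_ring v"
    and a0: "coeff f 0 \<noteq> 0"
    and slope: "\<forall>i\<in>{1..n-1}. coeff f (n - i) = 0 \<or>
                   real_of_int (v (coeff f (n - i))) > real i * real_of_int (v (coeff f 0)) / real n"
  shows "card {x. x \<noteq> 0 \<and> poly f x = 0} = card {x::'a. x \<noteq> 0 \<and> x ^ n + coeff f 0 = 0}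
       \<and> (\<not> int n dvd v (coeff f 0) \<longrightarrow> card {x. x \<noteq> 0 \<and> poly f x = 0} = 0)
       \<and> (int n dvd v (coeff f 0) \<longrightarrow>
            card {x. x \<noteq> 0 \<and> poly f x = 0} =
              (if is_nth_power_res v n (residue v (- (coeff f 0 / \<pi> powi v (coeff f 0))))
               then gcd n (q - 1) else 0))"
proof -
  interpret complete_valued_field v
    by unfold_locales (rule dv, rule compl)
  have n: "of_nat n \<notin> max_ideal v"
    using of_nat_notin_max_ideal[OF p_char p_ndvd] .
  have f: "pure_poly v n f"
    using pure_poly_if_slope[OF n_pos monic coeffs_A a0 slope] .
  have "pure_poly v n (monom 1 n + [:coeff f 0:])"
    using pure_poly_binomial[OF n_pos a0] coeffs_A by (simp add: val_ring_iff)
  note binomial = card_nonzero_roots_pure_poly[OF this unif n fin]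
  have "coeff (monom 1 n + [:coeff f 0:]) 0 = coeff f 0"
    using n_pos by simp
  moreover have "{x. x \<noteq> 0 \<and> x ^ n + coeff f 0 = 0}
      = {x. x \<noteq> 0 \<and> poly (monom 1 n + [:coeff f 0:]) x = 0}"
    by (simp add: poly_monom)
  ultimately show ?thesis
    using card_nonzero_roots_pure_poly[OF f unif n fin] binomial by (simp add: q_def)
qed

end
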